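(* Let $G$ be a finite simple cubic graph with a 3-decomposition $(T,C,M)$, and colour exactly the edges of $T$ green and all other edges black. If $T$ is a homeomorphically irreducible spanning tree (HIST), then $M=\emptyset$. Otherwise there is a finite simple cubic graph $G'$ with fewer vertices than $G$ and a 3-decomposition $(T',C,M')$ of $G'$ (with the same 2-regular part $C$) such that, if exactly the edges of $T'$ are coloured green, then $G$ together with its green/black colouring is obtained from $G'$ together with its colouring by a single Tutte-extension or a single diamond-extension. In particular, every 3-decomposition can be reduced to a 3-decomposition whose spanning tree is a HIST by a finite sequence of Tutte- and diamond-reductions.
   Context: All graphs are finite and simple. A graph is cubic if every vertex has degree 3. A 3-decomposition $(T,C,M)$ of a graph $G$ is a partition of $E(G)$ into the edge sets of a spanning tree $T$, a (possibly empty) 2-regular subgraph $C$ (a vertex-disjoint union of cycles), and a (possibly empty) matching $M$. A HIST (homeomorphically irreducible spanning tree) is a spanning tree without vertices of degree 2. The operations act on graphs whose edges are coloured green or black. Tutte-extension: choose two distinct green edges $x_uy_u$ and $x_vy_v$ (they may share an end); subdivide the first by a new vertex $u$ and the second by a new vertex $v$, the four resulting edges $x_uu,uy_u,x_vv,vy_v$ being green, and add a new black edge $uv$. Diamond-extension: choose a green edge $xy$, delete it, add new vertices $d_1,d_2,d_3,d_4$ with green edges $xd_1, d_1d_3, d_3d_2, d_2d_4, d_4y$ and black edges $d_1d_2, d_3d_4$ (so $d_1,d_2,d_3,d_4$ span a diamond, i.e. $K_4$ minus the edge $d_1d_4$). Tutte-reduction and diamond-reduction are the inverse operations. *)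

theory Defs
  imports Main
begin

definition simple_graph :: "'a set \<Rightarrow> 'a set set \<Rightarrow> bool" where
  "simple_graph V E \<longleftrightarrow> finite V \<and>
     (\<forall>e\<in>E. \<exists>u v. e = {u, v} \<and> u \<noteq> v \<and> u \<in> V \<and> v \<in> V)"

definition degree :: "'a set set \<Rightarrow> 'a \<Rightarrow> nat" where
  "degree F v = card {e \<in> F. v \<in> e}"

definition cubic :: "'a set \<Rightarrow> 'a set set \<Rightarrow> bool" where
  "cubic V E \<longleftrightarrow> simple_graph V E \<and> (\<forall>v\<in>V. degree E v = 3)"

definition reachable :: "'a set set \<Rightarrow> 'a \<Rightarrow> 'a \<Rightarrow> bool" where
  "reachable F u v \<longleftrightarrow> (u, v) \<in> {(x, y). {x, y} \<in> F}\<^sup>*"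

definition connected_on :: "'a set \<Rightarrow> 'a set set \<Rightarrow> bool" where
  "connected_on V F \<longleftrightarrow> (\<forall>u\<in>V. \<forall>v\<in>V. reachable F u v)"

text \<open>A spanning tree: a connected spanning subgraph that is acyclic,
i.e. every edge is a bridge (removing it separates its ends).\<close>
definition spanning_tree :: "'a set \<Rightarrow> 'a set set \<Rightarrow> 'a set set \<Rightarrow> bool" where
  "spanning_tree V E T \<longleftrightarrow> T \<subseteq> E \<and> connected_on V T \<and>
     (\<forall>u v. {u, v} \<in> T \<longrightarrow> \<not> reachable (T - {{u, v}}) u v)"

definition two_regular :: "'a set set \<Rightarrow> 'a set set \<Rightarrow> bool" where
  "two_regular E C \<longleftrightarrow> C \<subseteq> E \<and> (\<forall>v. degree C v = 0 \<or> degree C v = 2)"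

definition matching :: "'a set set \<Rightarrow> 'a set set \<Rightarrow> bool" where
  "matching E M \<longleftrightarrow> M \<subseteq> E \<and> (\<forall>v. degree M v \<le> 1)"

definition three_decomposition ::
  "'a set \<Rightarrow> 'a set set \<Rightarrow> 'a set set \<Rightarrow> 'a set set \<Rightarrow> 'a set set \<Rightarrow> bool" where
  "three_decomposition V E T C M \<longleftrightarrow>
     spanning_tree V E T \<and> two_regular E C \<and> matching E M \<and>
     T \<union> C \<union> M = E \<and> T \<inter> C = {} \<and> T \<inter> M = {} \<and> C \<inter> M = {}"

definition HIST :: "'a set \<Rightarrow> 'a set set \<Rightarrow> 'a set set \<Rightarrow> bool" where
  "HIST V E T \<longleftrightarrow> spanning_tree V E T \<and> (\<forall>v\<in>V. degree T v \<noteq> 2)"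

text \<open>Coloured graphs (V, E, T): the green edges are exactly T, the black
edges are E - T. tutte_ext G' G: G is obtained from G' by a Tutte-extension.\<close>
definition tutte_ext ::
  "'a set \<times> 'a set set \<times> 'a set set \<Rightarrow> 'a set \<times> 'a set set \<times> 'a set set \<Rightarrow> bool" where
  "tutte_ext G' G \<longleftrightarrow> (case G' of (V', E', T') \<Rightarrow> case G of (V, E, T) \<Rightarrow>
     (\<exists>xu yu xv yv u v.
        {xu, yu} \<in> T' \<and> {xv, yv} \<in> T' \<and> {xu, yu} \<noteq> {xv, yv} \<and>
        u \<notin> V' \<and> v \<notin> V' \<and> u \<noteq> v \<and>
        V = V' \<union> {u, v} \<and>
        E = (E' - {{xu, yu}, {xv, yv}}) \<union> {{xu, u}, {u, yu}, {xv, v}, {v, yv}, {u, v}} \<and>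
        T = (T' - {{xu, yu}, {xv, yv}}) \<union> {{xu, u}, {u, yu}, {xv, v}, {v, yv}}))"

definition diamond_ext ::
  "'a set \<times> 'a set set \<times> 'a set set \<Rightarrow> 'a set \<times> 'a set set \<times> 'a set set \<Rightarrow> bool" where
  "diamond_ext G' G \<longleftrightarrow> (case G' of (V', E', T') \<Rightarrow> case G of (V, E, T) \<Rightarrow>
     (\<exists>x y d1 d2 d3 d4.
        {x, y} \<in> T' \<and>
        d1 \<notin> V' \<and> d2 \<notin> V' \<and> d3 \<notin> V' \<and> d4 \<notin> V' \<and>
        d1 \<noteq> d2 \<and> d1 \<noteq> d3 \<and> d1 \<noteq> d4 \<and> d2 \<noteq> d3 \<and> d2 \<noteq> d4 \<and> d3 \<noteq> d4 \<and>
        V = V' \<union> {d1, d2, d3, d4} \<and>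
        E = (E' - {{x, y}}) \<union>
              {{x, d1}, {d1, d3}, {d3, d2}, {d2, d4}, {d4, y}, {d1, d2}, {d3, d4}} \<and>
        T = (T' - {{x, y}}) \<union> {{x, d1}, {d1, d3}, {d3, d2}, {d2, d4}, {d4, y}}))"

definition dec_step ::
  "'a set \<times> 'a set set \<times> 'a set set \<times> 'a set set \<times> 'a set set \<Rightarrow>
   'a set \<times> 'a set set \<times> 'a set set \<times> 'a set set \<times> 'a set set \<Rightarrow> bool" where
  "dec_step s' s \<longleftrightarrow> (case s' of (V', E', T', C', M') \<Rightarrow> case s of (V, E, T, C, M) \<Rightarrow>
     cubic V' E' \<and> three_decomposition V' E' T' C' M' \<and>
     cubic V E \<and> three_decomposition V E T C M \<and> C' = C \<and>
     (tutte_ext (V', E', T') (V, E, T) \<or> diamond_ext (V', E', T') (V, E, T)))"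

end

theory Submission
  imports Defs
begin

(*
  Both ends of an edge uw of M have tree-degree 2, and every vertex of tree-degree 2 is such an end;
  hence M is empty when T is a HIST. Otherwise we delete uw and suppress u and w, i.e. replace the tree
  path through each of them by an edge joining its two tree neighbours: this keeps T a spanning tree,
  the graph simple and cubic, and C untouched, and it is a Tutte-reduction unless the tree neighbours
  x, y of u (or of w) are adjacent. Then xy is no tree edge, as T has no cycles, and no edge of C,
  since x and y would then be leaves of T and T would be the path x u y, which misses w. So xy is in M,
  and either x and y allow a Tutte-reduction at xy, or u, w, x, y span a diamond. The outer tree
  neighbours a, b of that diamond are non-adjacent, giving a diamond-reduction, or joined by an edge
  which the same argument puts in M and which admits a Tutte-reduction. Every reduction lowers the
  number of vertices, so repeating it ends at a HIST.
*)

section \<open>Reachability and paths\<close>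

lemma reachable_refl [simp]: "reachable F u u"
  by (simp add: reachable_def)

lemma reachable_edge: "{u, v} \<in> F \<Longrightarrow> reachable F u v"
  by (auto simp: reachable_def)

lemma reachable_trans: "reachable F u v \<Longrightarrow> reachable F v w \<Longrightarrow> reachable F u w"
  unfolding reachable_def by (rule rtrancl_trans)

lemma reachable_sym:
  assumes "reachable F u v"
  shows "reachable F v u"
proof -
  have "sym {(x, y). {x, y} \<in> F}"
    by (auto intro: symI simp: insert_commute)
  then have "sym ({(x, y). {x, y} \<in> F}\<^sup>*)"
    by (rule sym_rtrancl)
  then show ?thesis
    using assms unfolding reachable_def by (rule symD)
qed

lemma reachable_image:
  assumes "\<And>a b. {a, b} \<in> F \<Longrightarrow> reachable G (f a) (f b)" and "reachable F u v"
  shows "reachable G (f u) (f v)"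
  using assms(2) unfolding reachable_def
proof (induction rule: rtrancl_induct)
  case (step v w)
  then show ?case
    using assms(1)[of v w] unfolding reachable_def by auto
qed simp

lemma reachable_mono:
  assumes "F \<subseteq> G" and "reachable F u v"
  shows "reachable G u v"
  by (rule reachable_image[where f = "\<lambda>z. z", OF _ assms(2)])
    (use assms(1) in \<open>auto intro: reachable_edge\<close>)

lemma reachable_first_edge:
  "reachable F u v \<Longrightarrow> u \<noteq> v \<Longrightarrow> \<exists>w. {u, w} \<in> F"
  unfolding reachable_def by (induction rule: converse_rtrancl_induct) auto

definition neighbours :: "'a set set \<Rightarrow> 'a \<Rightarrow> 'a set" where
  "neighbours F v = {w. {v, w} \<in> F}"

lemma in_neighbours_iff [simp]: "w \<in> neighbours F v \<longleftrightarrow> {v, w} \<in> F"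
  by (simp add: neighbours_def)

lemma neighbours_eq_doubletonD:
  assumes "neighbours F v = {a, b}"
  shows "{a, v} \<in> F" and "{v, b} \<in> F"
proof -
  have "a \<in> neighbours F v" "b \<in> neighbours F v" using assms by simp_all
  then show "{a, v} \<in> F" "{v, b} \<in> F" by (simp_all add: insert_commute)
qed

lemma reachable_closed:
  assumes "reachable F u v" and "u \<in> S" and "\<And>a. a \<in> S \<Longrightarrow> neighbours F a \<subseteq> S"
  shows "v \<in> S"
  using assms(1) unfolding reachable_def
proof (induction rule: rtrancl_induct)
  case (step y z)
  then show ?case using assms(3)[of y] by auto
qed (rule assms(2))

fun path_edges :: "'a list \<Rightarrow> 'a set set" where
  "path_edges (a # b # xs) = insert {a, b} (path_edges (b # xs))"
| "path_edges _ = {}"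

lemma path_edges_subset: "e \<in> path_edges xs \<Longrightarrow> e \<subseteq> set xs"
  by (induction xs rule: path_edges.induct) auto

lemma path_edges_at_head:
  assumes "distinct (x # v # xs)" and "e \<in> path_edges (x # v # xs)" and "x \<in> e"
  shows "e = {x, v}"
  using assms path_edges_subset[of e "v # xs"] by auto

lemma path_edges_cover: "z \<in> set xs \<Longrightarrow> 2 \<le> length xs \<Longrightarrow> \<exists>z'. {z, z'} \<in> path_edges xs"
proof (induction xs rule: path_edges.induct)
  case (1 a b xs)
  show ?case
  proof (cases "z = a \<or> z = b")
    case True
    then show ?thesis by (auto simp: insert_commute)
  next
    case False
    then have "z \<in> set (b # xs)" "2 \<le> length (b # xs)" using "1.prems"(1) by (auto simp: Suc_le_eq)
    then show ?thesis using "1.IH" by auto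
  qed
qed auto

lemma reachable_path: "path_edges (x # xs) \<subseteq> F \<Longrightarrow> reachable F x (last (x # xs))"
proof (induction xs arbitrary: x)
  case (Cons a xs)
  then have "reachable F x a" "reachable F a (last (a # xs))"
    by (auto intro: reachable_edge)
  then show ?case by (auto intro: reachable_trans)
qed simp

section \<open>Trees\<close>

definition tree :: "'a set \<Rightarrow> 'a set set \<Rightarrow> bool" where
  "tree V T \<longleftrightarrow> connected_on V T \<and> (\<forall>u v. {u, v} \<in> T \<longrightarrow> \<not> reachable (T - {{u, v}}) u v)"

lemma spanning_tree_iff: "spanning_tree V E T \<longleftrightarrow> T \<subseteq> E \<and> tree V T"
  by (auto simp: spanning_tree_def tree_def)

lemma tree_reachable: "tree V T \<Longrightarrow> u \<in> V \<Longrightarrow> v \<in> V \<Longrightarrow> reachable T u v"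
  by (simp add: tree_def connected_on_def)

lemma tree_bridge: "tree V T \<Longrightarrow> {u, v} \<in> T \<Longrightarrow> \<not> reachable (T - {{u, v}}) u v"
  by (simp add: tree_def)

lemma tree_no_loop: "tree V T \<Longrightarrow> {u, v} \<in> T \<Longrightarrow> u \<noteq> v"
  by (metis reachable_refl tree_bridge)

lemma tree_no_cycle:
  assumes "tree V T" and "distinct (x # vs @ [y])" and "vs \<noteq> []"
    and "path_edges (x # vs @ [y]) \<subseteq> T"
  shows "{x, y} \<notin> T"
proof
  assume xy: "{x, y} \<in> T"
  obtain v ws where vs: "vs = v # ws" using \<open>vs \<noteq> []\<close> by (cases vs) auto
  have "{x, y} \<noteq> {x, v}" using assms(2) vs by (auto simp: doubleton_eq_iff)
  then have "{x, y} \<notin> path_edges (x # vs @ [y])"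
    using path_edges_at_head[of x v "ws @ [y]" "{x, y}"] assms(2) vs by auto
  then have "path_edges (x # vs @ [y]) \<subseteq> T - {{x, y}}" using assms(4) by blast
  then have "reachable (T - {{x, y}}) x (last (x # vs @ [y]))" by (rule reachable_path)
  then show False using tree_bridge[OF assms(1) xy] by simp
qed

lemma tree_closed_subset:
  assumes "tree V T" and "u \<in> V" and "u \<in> S" and "\<And>a. a \<in> S \<Longrightarrow> neighbours T a \<subseteq> S"
  shows "V \<subseteq> S"
  using reachable_closed[OF tree_reachable[OF assms(1,2)]] assms(3,4) by blast

lemma connected_suppress:
  assumes T: "tree V T" and nv: "neighbours T v = {x, y}"
  shows "connected_on (V - {v}) (T - {{x, v}, {v, y}} \<union> {{x, y}})"
  unfolding connected_on_def
proof (intro ballI)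
  define T' where "T' = T - {{x, v}, {v, y}} \<union> {{x, y}}"
  have "v \<noteq> x" "v \<noteq> y" using nv tree_no_loop[OF T] by (auto simp flip: in_neighbours_iff)
  define f where "f z = (if z = v then x else z)" for z
  have at_v: "reachable T' (f v) (f w) \<and> reachable T' (f w) (f v)" if "{v, w} \<in> T" for w
  proof -
    have "w \<in> {x, y}" using that nv by (simp flip: in_neighbours_iff)
    moreover have "{x, y} \<in> T'" by (simp add: T'_def)
    ultimately have "reachable T' x w"
      by (auto intro: reachable_edge)
    moreover from this have "reachable T' w x" by (rule reachable_sym)
    moreover have "f w = w" using \<open>v \<noteq> x\<close> \<open>v \<noteq> y\<close> \<open>w \<in> {x, y}\<close> by (auto simp: f_def)
    ultimately show ?thesis by (simp add: f_def)
  qed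
  fix a b assume ab: "a \<in> V - {v}" "b \<in> V - {v}"
  have "reachable T' (f a) (f b)"
  proof (rule reachable_image[where f = f, OF _ tree_reachable[OF T]])
    fix c d assume cd: "{c, d} \<in> T"
    consider "c = v" | "d = v" | "c \<noteq> v" "d \<noteq> v" by blast
    then show "reachable T' (f c) (f d)"
    proof cases
      case 1
      then show ?thesis using at_v[of d] cd by simp
    next
      case 2
      then show ?thesis using at_v[of c] cd by (simp add: insert_commute)
    next
      case 3
      then have "{c, d} \<in> T'" using cd by (auto simp: T'_def doubleton_eq_iff)
      then show ?thesis using 3 by (simp add: f_def reachable_edge)
    qed
  qed (use ab in auto)
  then show "reachable T' a b" using ab by (simp add: f_def)
qed

lemma bridge_suppress:
  assumes T: "tree V T" and nv: "neighbours T v = {x, y}" and "x \<noteq> y"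
    and pq: "{p, q} \<in> T - {{x, v}, {v, y}} \<union> {{x, y}}"
  shows "\<not> reachable (T - {{x, v}, {v, y}} \<union> {{x, y}} - {{p, q}}) p q"
proof
  define T' where "T' = T - {{x, v}, {v, y}} \<union> {{x, y}}"
  assume reach: "reachable (T - {{x, v}, {v, y}} \<union> {{x, y}} - {{p, q}}) p q"
  then have reach': "reachable (T' - {{p, q}}) p q" by (simp add: T'_def)
  have vT: "{x, v} \<in> T" "{v, y} \<in> T" using neighbours_eq_doubletonD[OF nv] .
  show False
  proof (cases "{p, q} = {x, y}")
    case True
    have "T' - {{p, q}} \<subseteq> T - {{x, v}}" using True by (auto simp: T'_def)
    with reach' have "reachable (T - {{x, v}}) p q" by (rule reachable_mono[rotated])
    then have "reachable (T - {{x, v}}) x y"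
      using True by (auto simp: doubleton_eq_iff dest: reachable_sym)
    moreover have "reachable (T - {{x, v}}) y v"
      using vT \<open>x \<noteq> y\<close> by (auto simp: doubleton_eq_iff insert_commute intro: reachable_edge)
    ultimately show False
      using tree_bridge[OF T vT(1)] by (blast intro: reachable_trans)
  next
    case False
    then have pqT: "{p, q} \<in> T" "{p, q} \<noteq> {x, v}" "{p, q} \<noteq> {v, y}"
      using pq by auto
    have "reachable (T - {{p, q}}) p q"
    proof (rule reachable_image[where f = "\<lambda>z. z", OF _ reach'])
      fix a b assume ab: "{a, b} \<in> T' - {{p, q}}"
      show "reachable (T - {{p, q}}) a b"
      proof (cases "{a, b} = {x, y}")
        case True
        have "reachable (T - {{p, q}}) x y"
          using vT pqT by (blast intro: reachable_trans reachable_edge)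
        then show ?thesis
          using True by (auto simp: doubleton_eq_iff dest: reachable_sym)
      qed (use ab in \<open>auto simp: T'_def intro: reachable_edge\<close>)
    qed
    then show False using tree_bridge[OF T pqT(1)] by blast
  qed
qed

lemma tree_suppress:
  assumes "tree V T" and "neighbours T v = {x, y}" and "x \<noteq> y"
  shows "tree (V - {v}) (T - {{x, v}, {v, y}} \<union> {{x, y}})"
  using connected_suppress[OF assms(1,2)] bridge_suppress[OF assms] unfolding tree_def by blast

lemma simple_graph_edgeD:
  assumes "simple_graph V E" and "{u, v} \<in> E"
  shows "u \<noteq> v" and "u \<in> V" and "v \<in> V"
proof -
  obtain a b where "{u, v} = {a, b}" "a \<noteq> b" "a \<in> V" "b \<in> V"
    using assms unfolding simple_graph_def by blast
  then show "u \<noteq> v" "u \<in> V" "v \<in> V" by (auto simp: doubleton_eq_iff)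
qed

lemma simple_graph_subset: "simple_graph V E \<Longrightarrow> F \<subseteq> E \<Longrightarrow> simple_graph V F"
  unfolding simple_graph_def by blast

lemma simple_graph_finite: "simple_graph V E \<Longrightarrow> finite E"
  unfolding simple_graph_def by (metis (no_types, lifting) Pow_iff finite_Pow_iff finite_subset
      insert_subset subsetI empty_subsetI)

lemma neighbours_subset: "simple_graph V E \<Longrightarrow> neighbours E v \<subseteq> V"
  using simple_graph_edgeD(3) by fastforce

lemma finite_neighbours: "simple_graph V E \<Longrightarrow> finite (neighbours E v)"
  using neighbours_subset simple_graph_def finite_subset by metis

lemma degree_eq_card_neighbours:
  assumes "simple_graph V E"
  shows "degree E v = card (neighbours E v)"
proof -
  have "{e \<in> E. v \<in> e} = (\<lambda>w. {v, w}) ` neighbours E v"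
  proof (intro equalityI subsetI)
    fix e assume e: "e \<in> {e \<in> E. v \<in> e}"
    then obtain a b where "e = {a, b}"
      using assms unfolding simple_graph_def by blast
    with e show "e \<in> (\<lambda>w. {v, w}) ` neighbours E v"
      by (auto simp: insert_commute)
  qed auto
  moreover have "inj_on (\<lambda>w. {v, w}) (neighbours E v)"
    by (auto simp: inj_on_def doubleton_eq_iff)
  ultimately show ?thesis
    by (simp add: degree_def card_image)
qed

lemma card_insert_Diff_swap:
  "finite A \<Longrightarrow> a \<in> A \<Longrightarrow> b \<notin> A \<Longrightarrow> card (insert b (A - {a})) = card A"
  by (metis Diff_iff card_Suc_Diff1 card_insert_disjoint finite_Diff)

section \<open>Suppressing vertices of degree two\<close>

definition reduct ::
  "'a set \<Rightarrow> 'a set set \<Rightarrow> 'a set set \<Rightarrow> 'a set \<Rightarrow> 'a set set \<Rightarrow> 'a set set \<Rightarrow> bool" where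
  "reduct V E T V' E' T' \<longleftrightarrow> simple_graph V' E' \<and> spanning_tree V' E' T' \<and> E' - T' = E - T \<and>
     (\<forall>v \<in> V'. degree E' v = degree E v)"

lemma reduct_trans:
  "reduct V E T V' E' T' \<Longrightarrow> reduct V' E' T' V'' E'' T'' \<Longrightarrow> V'' \<subseteq> V' \<Longrightarrow> reduct V E T V'' E'' T''"
  by (auto simp: reduct_def)

lemma simple_graph_suppress:
  assumes G: "simple_graph V E" and nv: "neighbours E v = {x, y}" and "x \<noteq> y"
  defines "E' \<equiv> E - {{x, v}, {v, y}} \<union> {{x, y}}"
  shows "simple_graph (V - {v}) E'"
  unfolding simple_graph_def
proof (intro conjI ballI)
  show "finite (V - {v})" using G by (simp add: simple_graph_def)
  have "{v, x} \<in> E" "{v, y} \<in> E" using nv by (simp_all flip: in_neighbours_iff)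
  then have "x \<in> V" "y \<in> V" "x \<noteq> v" "v \<noteq> y" using simple_graph_edgeD[OF G] by blast+
  fix e assume "e \<in> E'"
  then consider "e = {x, y}" | "e \<in> E" "e \<noteq> {x, v}" "e \<noteq> {v, y}"
    by (auto simp: E'_def)
  then show "\<exists>a b. e = {a, b} \<and> a \<noteq> b \<and> a \<in> V - {v} \<and> b \<in> V - {v}"
  proof cases
    case 1
    then show ?thesis using \<open>x \<in> V\<close> \<open>y \<in> V\<close> \<open>x \<noteq> y\<close> \<open>x \<noteq> v\<close> \<open>v \<noteq> y\<close> by blast
  next
    case 2
    then obtain a b where ab: "e = {a, b}" "a \<noteq> b" "a \<in> V" "b \<in> V"
      using G unfolding simple_graph_def by blast
    have "v \<notin> e"
    proof
      assume "v \<in> e"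
      then obtain c where c: "e = {v, c}" using ab by auto
      then have "c \<in> {x, y}" using 2 nv by (simp flip: in_neighbours_iff)
      then show False using 2 c by (auto simp: insert_commute)
    qed
    then show ?thesis using ab by blast
  qed
qed

lemma degree_suppress:
  assumes G: "simple_graph V E" and nv: "neighbours E v = {x, y}" and "x \<noteq> y" and "{x, y} \<notin> E"
    and "w \<noteq> v"
  defines "E' \<equiv> E - {{x, v}, {v, y}} \<union> {{x, y}}"
  shows "degree E' w = degree E w"
proof -
  have "x \<noteq> v" "v \<noteq> y"
    using nv simple_graph_edgeD(1)[OF G] by (auto simp flip: in_neighbours_iff)
  have swap: "neighbours E' a = insert b (neighbours E a - {v})" if "{a, b} = {x, y}" for a b
    using that \<open>x \<noteq> v\<close> \<open>v \<noteq> y\<close> \<open>x \<noteq> y\<close> by (auto simp: E'_def doubleton_eq_iff insert_commute)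
  have "card (neighbours E' w) = card (neighbours E w)"
  proof (cases "w \<in> {x, y}")
    case True
    then obtain b where ab: "{w, b} = {x, y}" by (auto simp: insert_commute)
    then have "v \<in> neighbours E w" "b \<notin> neighbours E w"
      using nv \<open>{x, y} \<notin> E\<close> by (auto simp: doubleton_eq_iff insert_commute)
    then show ?thesis
      using swap[OF ab] card_insert_Diff_swap finite_neighbours[OF G] by metis
  next
    case False
    then have "neighbours E' w = neighbours E w"
      using \<open>w \<noteq> v\<close> by (auto simp: E'_def doubleton_eq_iff)
    then show ?thesis by simp
  qed
  then show ?thesis
    using degree_eq_card_neighbours[OF simple_graph_suppress[OF G nv \<open>x \<noteq> y\<close>]]
      degree_eq_card_neighbours[OF G] by (simp add: E'_def)
qed

lemma suppress_vertex:
  assumes G: "simple_graph V E" "spanning_tree V E T"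
    and nv: "neighbours E v = {x, y}" and vT: "{x, v} \<in> T" "{v, y} \<in> T"
    and "x \<noteq> y" and "{x, y} \<notin> E"
  defines "E' \<equiv> E - {{x, v}, {v, y}} \<union> {{x, y}}" and "T' \<equiv> T - {{x, v}, {v, y}} \<union> {{x, y}}"
  shows "reduct V E T (V - {v}) E' T'"
proof -
  have TE: "T \<subseteq> E" and T: "tree V T" using G(2) by (simp_all add: spanning_tree_iff)
  have "neighbours T v \<subseteq> neighbours E v" using TE by auto
  moreover have "x \<in> neighbours T v" "y \<in> neighbours T v" using vT by (simp_all add: insert_commute)
  ultimately have "neighbours T v = {x, y}" using nv by blast
  then have "spanning_tree (V - {v}) E' T'"
    using tree_suppress[OF T _ \<open>x \<noteq> y\<close>] TE by (auto simp: spanning_tree_iff E'_def T'_def)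
  moreover have "E' - T' = E - T"
    using vT TE \<open>{x, y} \<notin> E\<close> by (auto simp: E'_def T'_def)
  ultimately show ?thesis
    using simple_graph_suppress[OF G(1) nv \<open>x \<noteq> y\<close>] degree_suppress[OF G(1) nv \<open>x \<noteq> y\<close> \<open>{x, y} \<notin> E\<close>]
    unfolding reduct_def E'_def by blast
qed

lemma neighbours_path_inner:
  assumes "distinct (x # v # w # zs)" and "path_edges (x # v # w # zs) \<subseteq> E"
    and "\<And>u. {v, u} \<in> E \<Longrightarrow> {v, u} \<in> path_edges (x # v # w # zs)"
  shows "neighbours E v = {x, w}"
proof (intro equalityI subsetI)
  fix u assume "u \<in> neighbours E v"
  then have "{v, u} \<in> path_edges (x # v # w # zs)" using assms(3) by simp
  moreover have "{v, u} \<notin> path_edges (w # zs)"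
    using assms(1) path_edges_subset[of "{v, u}" "w # zs"] by auto
  ultimately show "u \<in> {x, w}" by (auto simp: doubleton_eq_iff)
qed (use assms(2) in \<open>auto simp: insert_commute\<close>)

lemma suppress_path:
  assumes "simple_graph V E" and "spanning_tree V E T"
    and "vs \<noteq> []" and "distinct (x # vs @ [y])" and "path_edges (x # vs @ [y]) \<subseteq> T"
    and "\<And>v w. v \<in> set vs \<Longrightarrow> {v, w} \<in> E \<Longrightarrow> {v, w} \<in> path_edges (x # vs @ [y])"
    and "{x, y} \<notin> E"
  shows "reduct V E T (V - set vs)
    (E - path_edges (x # vs @ [y]) \<union> {{x, y}}) (T - path_edges (x # vs @ [y]) \<union> {{x, y}})"
  using assms(3,1,2,4-)
proof (induction vs arbitrary: x V E T rule: list_nonempty_induct)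
  case (single v)
  have "T \<subseteq> E" using single.prems(2) by (simp add: spanning_tree_iff)
  then have "neighbours E v = {x, y}"
    using single.prems by (intro neighbours_path_inner[of x v y "[]"]) auto
  then show ?case
    using suppress_vertex[OF single.prems(1,2)] single.prems(3,4,6) by simp
next
  case (cons v vs)
  (* Suppressing the first inner vertex v leaves the path x vs y, with the new edge x w. *)
  obtain w ws where vs: "vs = w # ws" using cons.hyps by (cases vs) auto
  let ?P = "path_edges (w # ws @ [y])"
  have P: "path_edges (x # (v # vs) @ [y]) = insert {x, v} (insert {v, w} ?P)"
    by (simp add: vs)
  have "T \<subseteq> E" using cons.prems(2) by (simp add: spanning_tree_iff)
  have dist: "distinct (x # v # w # ws @ [y])" using cons.prems(3) vs by simp
  have nv: "neighbours E v = {x, w}"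
    using cons.prems(4,5) \<open>T \<subseteq> E\<close> dist P
    by (intro neighbours_path_inner[of x v w "ws @ [y]"]) (auto simp: vs)
  have "{w, x} \<notin> path_edges (x # v # w # ws @ [y])"
    using path_edges_at_head[OF dist, of "{w, x}"] dist by (auto simp: doubleton_eq_iff)
  then have "{w, x} \<notin> E" using cons.prems(5)[of w x] by (auto simp: vs)
  then have "{x, w} \<notin> E" by (simp add: insert_commute)
  define E1 T1 where "E1 = E - {{x, v}, {v, w}} \<union> {{x, w}}" and "T1 = T - {{x, v}, {v, w}} \<union> {{x, w}}"
  have vT: "{x, v} \<in> T" "{v, w} \<in> T" using cons.prems(4) by (simp_all add: vs)
  have step: "reduct V E T (V - {v}) E1 T1"
    unfolding E1_def T1_def
    by (rule suppress_vertex[OF cons.prems(1,2) nv vT]) (use dist \<open>{x, w} \<notin> E\<close> in auto)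
  have v_off: "v \<notin> e" if "e \<in> ?P" for e
    using path_edges_subset[OF that] dist by auto
  have "reduct (V - {v}) E1 T1 (V - {v} - set vs)
    (E1 - path_edges (x # vs @ [y]) \<union> {{x, y}}) (T1 - path_edges (x # vs @ [y]) \<union> {{x, y}})"
  proof (rule cons.IH)
    show "distinct (x # vs @ [y])" using dist by (simp add: vs)
    show "path_edges (x # vs @ [y]) \<subseteq> T1"
      using cons.prems(4) v_off by (auto simp: vs T1_def P)
    show "{u, z} \<in> path_edges (x # vs @ [y])" if "u \<in> set vs" "{u, z} \<in> E1" for u z
    proof (cases "{u, z} = {x, w}")
      case False
      then have uz: "{u, z} \<in> E - {{x, v}, {v, w}}" using that(2) by (simp add: E1_def)
      then have "{u, z} \<in> path_edges (x # (v # vs) @ [y])"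
        using cons.prems(5)[of u z] that(1) by simp
      then have "{u, z} \<in> ?P" using uz unfolding P by blast
      then show ?thesis by (simp add: vs)
    qed (simp add: vs)
    show "{x, y} \<notin> E1" using \<open>{x, y} \<notin> E\<close> dist by (auto simp: E1_def doubleton_eq_iff)
  qed (use step in \<open>auto simp: reduct_def\<close>)
  with step have "reduct V E T (V - {v} - set vs)
    (E1 - path_edges (x # vs @ [y]) \<union> {{x, y}}) (T1 - path_edges (x # vs @ [y]) \<union> {{x, y}})"
    by (rule reduct_trans) auto
  moreover have "E1 - path_edges (x # vs @ [y]) = E - path_edges (x # (v # vs) @ [y])"
    using \<open>{x, w} \<notin> E\<close> by (auto simp: E1_def P vs)
  moreover have "T1 - path_edges (x # vs @ [y]) = T - path_edges (x # (v # vs) @ [y])"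
    using \<open>{x, w} \<notin> E\<close> \<open>T \<subseteq> E\<close> by (auto simp: T1_def P vs)
  moreover have "V - {v} - set vs = V - set (v # vs)" by auto
  ultimately show ?case by simp
qed

lemma tutte_extI:
  assumes "{{a, p}, {p, b}, {c, q}, {q, d}} \<subseteq> T" and "T \<subseteq> E" and "{p, q} \<in> E"
    and "{a, b} \<notin> E" and "{c, d} \<notin> E" and "{a, b} \<noteq> {c, d}" and "q \<notin> {a, b}" and "p \<noteq> q"
    and "p \<in> V" and "q \<in> V"
  shows "tutte_ext (V - {p} - {q},
      E - {{p, q}} - {{a, p}, {p, b}} \<union> {{a, b}} - {{c, q}, {q, d}} \<union> {{c, d}},
      T - {{a, p}, {p, b}} \<union> {{a, b}} - {{c, q}, {q, d}} \<union> {{c, d}}) (V, E, T)"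
proof -
  let ?E' = "E - {{p, q}} - {{a, p}, {p, b}} \<union> {{a, b}} - {{c, q}, {q, d}} \<union> {{c, d}}"
  let ?T' = "T - {{a, p}, {p, b}} \<union> {{a, b}} - {{c, q}, {q, d}} \<union> {{c, d}}"
  have "{a, b} \<in> ?T'" "{c, d} \<in> ?T'" using assms(7) by (auto simp: doubleton_eq_iff)
  moreover have "E = ?E' - {{a, b}, {c, d}} \<union> {{a, p}, {p, b}, {c, q}, {q, d}, {p, q}}"
    using assms(1-5) by blast
  moreover have "T = ?T' - {{a, b}, {c, d}} \<union> {{a, p}, {p, b}, {c, q}, {q, d}}"
    using assms(1,2,4,5) by blast
  moreover have "V = (V - {p} - {q}) \<union> {p, q}" "p \<notin> V - {p} - {q}" "q \<notin> V - {p} - {q}"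
    using assms(9,10) by auto
  ultimately show ?thesis
    unfolding tutte_ext_def prod.case using assms(6,8)
    by (intro exI[of _ a] exI[of _ b] exI[of _ c] exI[of _ d] exI[of _ p] exI[of _ q] conjI) assumption+
qed

lemma diamond_extI:
  assumes "{{x, d1}, {d1, d3}, {d3, d2}, {d2, d4}, {d4, y}} \<subseteq> T" and "T \<subseteq> E"
    and "{{d1, d2}, {d3, d4}} \<subseteq> E" and "{x, y} \<notin> E" and "distinct [d1, d2, d3, d4]"
    and "{d1, d2, d3, d4} \<subseteq> V"
  shows "diamond_ext (V - {d1, d3, d2, d4},
      E - {{d1, d2}, {d3, d4}} - {{x, d1}, {d1, d3}, {d3, d2}, {d2, d4}, {d4, y}} \<union> {{x, y}},
      T - {{x, d1}, {d1, d3}, {d3, d2}, {d2, d4}, {d4, y}} \<union> {{x, y}}) (V, E, T)"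
proof -
  let ?P = "{{x, d1}, {d1, d3}, {d3, d2}, {d2, d4}, {d4, y}}"
  have "E = (E - {{d1, d2}, {d3, d4}} - ?P \<union> {{x, y}}) - {{x, y}} \<union>
      {{x, d1}, {d1, d3}, {d3, d2}, {d2, d4}, {d4, y}, {d1, d2}, {d3, d4}}"
    using assms(1-4) by blast
  moreover have "T = (T - ?P \<union> {{x, y}}) - {{x, y}} \<union> ?P"
    using assms(1,2,4) by blast
  moreover have "V = (V - {d1, d3, d2, d4}) \<union> {d1, d2, d3, d4}" using assms(6) by auto
  moreover have "{x, y} \<in> T - ?P \<union> {{x, y}}" by simp
  moreover have "d1 \<notin> V - {d1, d3, d2, d4}" "d2 \<notin> V - {d1, d3, d2, d4}"
    "d3 \<notin> V - {d1, d3, d2, d4}" "d4 \<notin> V - {d1, d3, d2, d4}" by auto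
  moreover have "d1 \<noteq> d2" "d1 \<noteq> d3" "d1 \<noteq> d4" "d2 \<noteq> d3" "d2 \<noteq> d4" "d3 \<noteq> d4"
    using assms(5) by auto
  ultimately show ?thesis
    unfolding diamond_ext_def prod.case
    by (intro exI[of _ x] exI[of _ y] exI[of _ d1] exI[of _ d2] exI[of _ d3] exI[of _ d4] conjI) assumption+
qed

section \<open>Cubic graphs with a 3-decomposition\<close>

definition reducible :: "'a set \<Rightarrow> 'a set set \<Rightarrow> 'a set set \<Rightarrow> 'a set set \<Rightarrow> bool" where
  "reducible V E T C \<longleftrightarrow> (\<exists>V' E' T' M'. cubic V' E' \<and> card V' < card V \<and>
     three_decomposition V' E' T' C M' \<and>
     (tutte_ext (V', E', T') (V, E, T) \<or> diamond_ext (V', E', T') (V, E, T)))"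

locale cubic_decomposition =
  fixes V :: "'a set" and E T C M :: "'a set set"
  assumes cubic: "cubic V E" and decomposition: "three_decomposition V E T C M"
begin

lemma simple: "simple_graph V E"
  using cubic by (simp add: cubic_def)

lemma spanning: "spanning_tree V E T"
  using decomposition by (simp add: three_decomposition_def)

lemma tree: "tree V T" and T_sub: "T \<subseteq> E"
  using spanning by (simp_all add: spanning_tree_iff)

lemma C_sub: "C \<subseteq> E" and M_sub: "M \<subseteq> E" and E_eq: "E = T \<union> C \<union> M"
  and disjoint: "T \<inter> C = {}" "T \<inter> M = {}" "C \<inter> M = {}"
  using decomposition by (auto simp: three_decomposition_def two_regular_def matching_def)

lemma edge_ends: "{u, v} \<in> E \<Longrightarrow> u \<noteq> v \<and> u \<in> V \<and> v \<in> V"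
  using simple_graph_edgeD[OF simple] by blast

lemma tree_matching_ends: "{v, a} \<in> T \<Longrightarrow> {v, b} \<in> M \<Longrightarrow> a \<noteq> b"
  using disjoint(2) by blast

lemma card_neighbours_sub: "F \<subseteq> E \<Longrightarrow> card (neighbours F v) = degree F v"
  using degree_eq_card_neighbours simple_graph_subset[OF simple] by metis

lemma finite_neighbours_sub: "F \<subseteq> E \<Longrightarrow> finite (neighbours F v)"
  using finite_neighbours simple_graph_subset[OF simple] by metis

lemma card_neighbours_E: "v \<in> V \<Longrightarrow> card (neighbours E v) = 3"
  using cubic card_neighbours_sub[of E] by (simp add: cubic_def)

lemma card_neighbours_C: "card (neighbours C v) = 0 \<or> card (neighbours C v) = 2"
  using decomposition card_neighbours_sub[OF C_sub]
  by (simp add: three_decomposition_def two_regular_def)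

lemma card_neighbours_M: "card (neighbours M v) \<le> 1"
  using decomposition card_neighbours_sub[OF M_sub]
  by (simp add: three_decomposition_def matching_def)

lemma card_neighbours_split:
  "card (neighbours E v) = card (neighbours T v) + card (neighbours C v) + card (neighbours M v)"
proof -
  have "neighbours E v = neighbours T v \<union> neighbours C v \<union> neighbours M v"
    using E_eq by auto
  moreover have "neighbours T v \<inter> neighbours C v = {}" "(neighbours T v \<union> neighbours C v) \<inter> neighbours M v = {}"
    using disjoint by auto
  ultimately show ?thesis
    using finite_neighbours_sub T_sub C_sub M_sub by (simp add: card_Un_disjoint)
qed

lemma neighbours_T_nonempty:
  assumes "v \<in> V"
  shows "neighbours T v \<noteq> {}"
proof -
  have "neighbours E v \<noteq> {}" using card_neighbours_E[OF assms] by auto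
  then obtain w where "{v, w} \<in> E" by auto
  then have "reachable T v w" "v \<noteq> w"
    using tree_reachable[OF tree] assms edge_ends by auto
  then show ?thesis using reachable_first_edge by fastforce
qed

lemma matched_vertex:
  assumes "{v, w} \<in> M"
  shows "card (neighbours T v) = 2" and "neighbours C v = {}" and "neighbours M v = {w}"
proof -
  have "v \<in> V" using assms M_sub edge_ends by blast
  have "w \<in> neighbours M v" using assms by simp
  then have "card (neighbours M v) \<noteq> 0"
    using finite_neighbours_sub[OF M_sub, of v] by auto
  then have "card (neighbours M v) = 1"
    using card_neighbours_M[of v] by linarith
  then obtain z where "neighbours M v = {z}" by (rule card_1_singletonE)
  then show "neighbours M v = {w}" using \<open>w \<in> neighbours M v\<close> by simp
  have "card (neighbours T v) \<noteq> 0"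
    using neighbours_T_nonempty[OF \<open>v \<in> V\<close>] finite_neighbours_sub[OF T_sub] by simp
  then show "card (neighbours T v) = 2" "neighbours C v = {}"
    using card_neighbours_split[of v] card_neighbours_E[OF \<open>v \<in> V\<close>] card_neighbours_C[of v]
      \<open>card (neighbours M v) = 1\<close> finite_neighbours_sub[OF C_sub] by auto
qed

lemma cycle_vertex:
  assumes "{v, w} \<in> C"
  shows "card (neighbours T v) = 1" and "card (neighbours C v) = 2"
proof -
  have "v \<in> V" using assms C_sub edge_ends by blast
  have "card (neighbours C v) \<noteq> 0"
    using assms finite_neighbours_sub[OF C_sub] by auto
  then show "card (neighbours C v) = 2" using card_neighbours_C[of v] by auto
  have "card (neighbours T v) \<noteq> 0"
    using neighbours_T_nonempty[OF \<open>v \<in> V\<close>] finite_neighbours_sub[OF T_sub] by simp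
  then show "card (neighbours T v) = 1"
    using card_neighbours_split[of v] card_neighbours_E[OF \<open>v \<in> V\<close>]
      \<open>card (neighbours C v) = 2\<close> by auto
qed

lemma neighbours_E_matched:
  assumes "{v, w} \<in> M"
  shows "neighbours E v = insert w (neighbours T v)"
proof -
  have "neighbours E v = neighbours T v \<union> neighbours C v \<union> neighbours M v"
    using E_eq by auto
  then show ?thesis using matched_vertex(2,3)[OF assms] by auto
qed

lemma neighbours_Diff_matching:
  assumes "D \<subseteq> M" and "{v, w} \<in> D"
  shows "neighbours (E - D) v = neighbours T v"
proof -
  have vw: "{v, w} \<in> M" using assms by blast
  have "u = w" if "{v, u} \<in> D" for u
  proof -
    have "u \<in> neighbours M v" using that assms(1) by auto
    then show "u = w" using matched_vertex(3)[OF vw] by simp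
  qed
  then have D_at_v: "{u. {v, u} \<in> D} = {w}" using assms(2) by blast
  have "w \<notin> neighbours T v" using tree_matching_ends[OF _ vw] by auto
  have "neighbours (E - D) v = neighbours E v - {u. {v, u} \<in> D}" by auto
  also have "\<dots> = insert w (neighbours T v) - {w}" using neighbours_E_matched[OF vw] D_at_v by simp
  also have "\<dots> = neighbours T v" using \<open>w \<notin> neighbours T v\<close> by simp
  finally show ?thesis .
qed

lemma matched_neighbours_T:
  assumes "{v, w} \<in> M" and "a \<in> neighbours T v"
  obtains b where "b \<noteq> a" and "neighbours T v = {a, b}"
proof -
  obtain x y where xy: "neighbours T v = {x, y}" "x \<noteq> y"
    using matched_vertex(1)[OF assms(1)] by (auto simp: card_2_iff)
  then consider "a = x" | "a = y" using assms(2) by blast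
  then show ?thesis
  proof cases
    case 1
    then show ?thesis using that[of y] xy by simp
  next
    case 2
    then show ?thesis using that[of x] xy by (simp add: insert_commute)
  qed
qed

lemma degree_two_matched:
  assumes "v \<in> V" and "card (neighbours T v) = 2"
  obtains w where "{v, w} \<in> M"
proof -
  have "card (neighbours M v) \<noteq> 0"
    using card_neighbours_split[of v] card_neighbours_E[OF assms(1)] card_neighbours_C[of v] assms(2)
    by auto
  then obtain w where "w \<in> neighbours M v" by (metis card.empty ex_in_conv)
  then show ?thesis using that by simp
qed

lemma M_empty_if_HIST:
  assumes "HIST V E T"
  shows "M = {}"
proof -
  have "{v, w} \<notin> M" for v w
  proof
    assume "{v, w} \<in> M"
    then have "v \<in> V" "degree T v = 2"
      using matched_vertex(1) card_neighbours_sub[OF T_sub] M_sub edge_ends by auto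
    then show False using assms by (simp add: HIST_def)
  qed
  moreover have "\<exists>v w. e = {v, w}" if "e \<in> M" for e
    using that M_sub simple unfolding simple_graph_def by blast
  ultimately show ?thesis by blast
qed

section \<open>Reductions\<close>

lemma delete_matching_edges:
  assumes "D \<subseteq> M"
  shows "simple_graph V (E - D)" and "spanning_tree V (E - D) T" and "E - D - T = C \<union> (M - D)"
    and "\<And>v. v \<notin> \<Union>D \<Longrightarrow> degree (E - D) v = degree E v"
proof -
  show "simple_graph V (E - D)" using simple_graph_subset[OF simple] by blast
  show "spanning_tree V (E - D) T" using tree T_sub assms disjoint(2) by (auto simp: spanning_tree_iff)
  show "E - D - T = C \<union> (M - D)" using E_eq disjoint assms by auto
  show "degree (E - D) v = degree E v" if "v \<notin> \<Union>D" for v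
    unfolding degree_def by (rule arg_cong[where f = card]) (use that in auto)
qed

lemma reduct_three_decomposition:
  assumes "D \<subseteq> M" and "reduct V (E - D) T V' E' T'" and "V' \<subseteq> V - \<Union>D"
  shows "cubic V' E' \<and> three_decomposition V' E' T' C (M - D)"
proof -
  have spanning': "spanning_tree V' E' T'" and ET: "E' - T' = C \<union> (M - D)"
    using assms(2) delete_matching_edges(3)[OF assms(1)] by (auto simp: reduct_def)
  have "T' \<subseteq> E'" using spanning' by (simp add: spanning_tree_iff)
  have "two_regular E' C"
    using decomposition ET by (auto simp: three_decomposition_def two_regular_def)
  moreover have "matching E' (M - D)"
  proof -
    have "degree (M - D) v \<le> 1" for v
    proof -
      have "degree (M - D) v \<le> degree M v"
        unfolding degree_def using finite_subset[OF M_sub simple_graph_finite[OF simple]]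
        by (intro card_mono) auto
      moreover have "degree M v \<le> 1"
        using decomposition by (simp add: three_decomposition_def matching_def)
      ultimately show ?thesis by linarith
    qed
    then show ?thesis using ET by (auto simp: matching_def)
  qed
  moreover have "T' \<union> C \<union> (M - D) = E'" using \<open>T' \<subseteq> E'\<close> ET by blast
  moreover have "T' \<inter> C = {}" "T' \<inter> (M - D) = {}" using ET by blast+
  moreover have "C \<inter> (M - D) = {}" using disjoint(3) by blast
  ultimately have "three_decomposition V' E' T' C (M - D)"
    using spanning' by (simp add: three_decomposition_def)
  moreover have "degree E' v = 3" if "v \<in> V'" for v
    using that assms delete_matching_edges(4) cubic by (auto simp: reduct_def cubic_def)
  then have "cubic V' E'" using assms(2) by (simp add: cubic_def reduct_def)
  ultimately show ?thesis by blast
qed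

lemma reducible_intro:
  assumes "D \<subseteq> M" and "reduct V (E - D) T V' E' T'" and "V' \<subseteq> V - \<Union>D" and "V' \<noteq> V"
    and "tutte_ext (V', E', T') (V, E, T) \<or> diamond_ext (V', E', T') (V, E, T)"
  shows "reducible V E T C"
proof -
  have "card V' < card V"
    using assms(3,4) simple by (intro psubset_card_mono) (auto simp: simple_graph_def)
  then show ?thesis
    using reduct_three_decomposition[OF assms(1-3)] assms(5) unfolding reducible_def by blast
qed

lemma matched_edge_distinct:
  assumes pq: "{p, q} \<in> M" and np: "neighbours T p = {a, b}" and nq: "neighbours T q = {c, d}"
  shows "distinct [a, p, b]" and "distinct [c, q, d]" and "p \<noteq> q" and "q \<notin> {a, b}" and "p \<notin> {c, d}"
    and "{a, b} \<noteq> {c, d}"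
proof -
  have qp: "{q, p} \<in> M" using pq by (simp add: insert_commute)
  have T: "{a, p} \<in> T" "{p, b} \<in> T" "{c, q} \<in> T" "{q, d} \<in> T"
    using neighbours_eq_doubletonD[OF np] neighbours_eq_doubletonD[OF nq] by simp_all
  have "card {a, b} = 2" "card {c, d} = 2"
    using matched_vertex(1)[OF pq] matched_vertex(1)[OF qp] np nq by simp_all
  then show "distinct [a, p, b]" "distinct [c, q, d]"
    using T tree_no_loop[OF tree] by (auto simp: card_2_iff)
  show "p \<noteq> q" using pq M_sub edge_ends by blast
  show "q \<notin> {a, b}" "p \<notin> {c, d}"
    using tree_matching_ends[of p _ q] tree_matching_ends[of q _ p] T pq qp by (auto simp: insert_commute)
  show "{a, b} \<noteq> {c, d}"
  proof
    assume "{a, b} = {c, d}"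
    then have "{a, q} \<in> T" "{q, b} \<in> T" using neighbours_eq_doubletonD[of T q a b] nq by simp_all
    moreover have "distinct [a, p, b, q]"
      using \<open>distinct [a, p, b]\<close> \<open>p \<noteq> q\<close> \<open>q \<notin> {a, b}\<close> by auto
    ultimately show False
      using tree_no_cycle[OF tree, of a "[p, b]" q] T by (simp add: insert_commute)
  qed
qed

lemma reducible_by_tutte:
  assumes pq: "{p, q} \<in> M" and np: "neighbours T p = {a, b}" and nq: "neighbours T q = {c, d}"
    and ab: "{a, b} \<notin> E" and cd: "{c, d} \<notin> E"
  shows "reducible V E T C"
proof -
  note conf = matched_edge_distinct[OF pq np nq]
  have "p \<in> V" "q \<in> V" using edge_ends[of p q] pq M_sub by auto
  have T: "{a, p} \<in> T" "{p, b} \<in> T" "{c, q} \<in> T" "{q, d} \<in> T"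
    using neighbours_eq_doubletonD[OF np] neighbours_eq_doubletonD[OF nq] by simp_all
  define E0 where "E0 = E - {{p, q}}"
  define E1 T1 where "E1 = E0 - {{a, p}, {p, b}} \<union> {{a, b}}" and "T1 = T - {{a, p}, {p, b}} \<union> {{a, b}}"
  define E2 T2 where "E2 = E1 - {{c, q}, {q, d}} \<union> {{c, d}}" and "T2 = T1 - {{c, q}, {q, d}} \<union> {{c, d}}"
  have DM: "{{p, q}} \<subseteq> M" using pq by simp
  note G0 = delete_matching_edges[OF DM, folded E0_def]
  have "neighbours E0 p = {a, b}"
    using neighbours_Diff_matching[OF DM, of p q] np by (simp add: E0_def)
  moreover have "a \<noteq> b" "{a, b} \<notin> E0" using conf(1) ab by (auto simp: E0_def)
  ultimately have G1: "reduct V E0 T (V - {p}) E1 T1"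
    unfolding E1_def T1_def using suppress_vertex[OF G0(1,2) _ T(1,2)] by blast
  have "neighbours E1 q = neighbours E0 q"
    using conf(3,4) by (auto simp: E1_def doubleton_eq_iff)
  also have "\<dots> = {c, d}"
    using neighbours_Diff_matching[OF DM, of q p] nq by (simp add: E0_def insert_commute)
  finally have "neighbours E1 q = {c, d}" .
  moreover have "{c, q} \<in> T1" "{q, d} \<in> T1" using T conf(3,5) by (auto simp: T1_def doubleton_eq_iff)
  moreover have "c \<noteq> d" "{c, d} \<notin> E1" using conf(2,6) cd by (auto simp: E1_def E0_def)
  moreover have "simple_graph (V - {p}) E1" "spanning_tree (V - {p}) E1 T1"
    using G1 by (simp_all add: reduct_def)
  ultimately have "reduct (V - {p}) E1 T1 (V - {p} - {q}) E2 T2"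
    unfolding E2_def T2_def by (intro suppress_vertex)
  with G1 have "reduct V E0 T (V - {p} - {q}) E2 T2" by (rule reduct_trans) auto
  moreover have "tutte_ext (V - {p} - {q}, E2, T2) (V, E, T)"
    unfolding E2_def E1_def E0_def T2_def T1_def
    by (rule tutte_extI) (use T T_sub pq M_sub ab cd conf(3,4,6) \<open>p \<in> V\<close> \<open>q \<in> V\<close> in auto)
  ultimately show ?thesis
    using reducible_intro[OF DM] \<open>p \<in> V\<close> unfolding E0_def by auto
qed

lemma reducible_by_diamond:
  assumes M12: "{d1, d2} \<in> M" and M34: "{d3, d4} \<in> M"
    and n1: "neighbours T d1 = {x, d3}" and n2: "neighbours T d2 = {d3, d4}"
    and n3: "neighbours T d3 = {d1, d2}" and n4: "neighbours T d4 = {d2, y}"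
    and dist: "distinct [x, d1, d3, d2, d4, y]" and xy: "{x, y} \<notin> E"
  shows "reducible V E T C"
proof -
  define D where "D = {{d1, d2}, {d3, d4}}"
  define P where "P = {{x, d1}, {d1, d3}, {d3, d2}, {d2, d4}, {d4, y}}"
  define V' E' T' where "V' = V - {d1, d3, d2, d4}" and "E' = E - D - P \<union> {{x, y}}"
    and "T' = T - P \<union> {{x, y}}"
  have DM: "D \<subseteq> M" using M12 M34 by (simp add: D_def)
  note G0 = delete_matching_edges[OF DM]
  have V: "d1 \<in> V" "d2 \<in> V" "d3 \<in> V" "d4 \<in> V" using M12 M34 M_sub edge_ends by auto
  have PT: "P \<subseteq> T"
    using neighbours_eq_doubletonD[OF n1] neighbours_eq_doubletonD[OF n2]
      neighbours_eq_doubletonD[OF n4] by (simp add: P_def)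
  have nbrs: "neighbours (E - D) d1 = {x, d3}" "neighbours (E - D) d2 = {d3, d4}"
    "neighbours (E - D) d3 = {d1, d2}" "neighbours (E - D) d4 = {d2, y}"
    using neighbours_Diff_matching[OF DM, of d1 d2] neighbours_Diff_matching[OF DM, of d2 d1]
      neighbours_Diff_matching[OF DM, of d3 d4] neighbours_Diff_matching[OF DM, of d4 d3]
      n1 n2 n3 n4 by (simp_all add: D_def insert_commute)
  have path: "{d1, x} \<in> P" "{d1, d3} \<in> P" "{d3, d1} \<in> P" "{d3, d2} \<in> P" "{d2, d3} \<in> P"
    "{d2, d4} \<in> P" "{d4, d2} \<in> P" "{d4, y} \<in> P"
    by (simp_all add: P_def insert_commute)
  have inner: "{v, w} \<in> P" if "v \<in> set [d1, d3, d2, d4]" "{v, w} \<in> E - D" for v w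
  proof -
    have w: "w \<in> neighbours (E - D) v" using that(2) by simp
    from that(1) consider "v = d1" | "v = d3" | "v = d2" | "v = d4" by auto
    then show ?thesis using w nbrs path by cases auto
  qed
  have "path_edges (x # [d1, d3, d2, d4] @ [y]) = P" by (simp add: P_def)
  then have "reduct V (E - D) T V' E' T'"
    using suppress_path[OF G0(1,2), of "[d1, d3, d2, d4]" x y] dist PT inner xy
    by (simp add: V'_def E'_def T'_def)
  moreover have "V' \<subseteq> V - \<Union>D" "V' \<noteq> V" using V by (auto simp: V'_def D_def)
  moreover have "diamond_ext (V', E', T') (V, E, T)"
    unfolding V'_def E'_def T'_def D_def P_def
    by (rule diamond_extI) (use PT T_sub M12 M34 M_sub xy dist V in \<open>auto simp: P_def\<close>)
  ultimately show ?thesis using reducible_intro[OF DM] by blast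
qed

lemma cycle_vertex_neighbours_on_path:
  assumes "{z, w} \<in> C" and "z \<in> set xs" and "2 \<le> length xs" and "path_edges xs \<subseteq> T"
  shows "neighbours T z \<subseteq> set xs"
proof -
  obtain z' where z': "{z, z'} \<in> path_edges xs" using path_edges_cover[OF assms(2,3)] by blast
  then have "z' \<in> set xs" using path_edges_subset[OF z'] by simp
  moreover have "z' \<in> neighbours T z" using z' assms(4) by auto
  moreover have "card (neighbours T z) = 1" using cycle_vertex(1)[OF assms(1)] .
  ultimately show ?thesis by (metis card_1_singletonE singletonD subsetI)
qed

(* Were ab in C, the path would be all of T, as its ends are leaves of T, and would contain the third
   vertex of the C-cycle through a and b; but the inner vertices of the path do not lie on C. *)
lemma closing_edge_in_M:
  assumes dist: "distinct (a # vs @ [b])" and "vs \<noteq> []" and PT: "path_edges (a # vs @ [b]) \<subseteq> T"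
    and closed: "\<And>v. v \<in> set vs \<Longrightarrow> neighbours T v \<subseteq> set (a # vs @ [b])"
    and inner: "\<And>v. v \<in> set vs \<Longrightarrow> neighbours C v = {}"
    and ab: "{a, b} \<in> E"
  shows "{a, b} \<in> M"
proof -
  let ?S = "set (a # vs @ [b])"
  have "{a, b} \<notin> C"
  proof
    assume abC: "{a, b} \<in> C"
    then have baC: "{b, a} \<in> C" by (simp add: insert_commute)
    have "2 \<le> length (a # vs @ [b])" by simp
    then have "neighbours T a \<subseteq> ?S" "neighbours T b \<subseteq> ?S"
      using cycle_vertex_neighbours_on_path[OF abC _ _ PT] cycle_vertex_neighbours_on_path[OF baC _ _ PT]
      by simp_all
    then have "neighbours T z \<subseteq> ?S" if "z \<in> ?S" for z
      using that closed by auto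
    moreover have "a \<in> V" using abC C_sub edge_ends by blast
    ultimately have "V \<subseteq> ?S" by (intro tree_closed_subset[OF tree, of a]) auto
    have "card (neighbours C a) = 2" using cycle_vertex(2)[OF abC] .
    moreover have "b \<in> neighbours C a" using abC by simp
    ultimately obtain c where c: "c \<in> neighbours C a" "c \<noteq> b"
      by (metis card_2_iff insertCI)
    then have "{a, c} \<in> E" using C_sub by auto
    then have "c \<in> ?S" "c \<noteq> a" using \<open>V \<subseteq> ?S\<close> edge_ends by auto
    moreover have "c \<notin> set vs"
    proof
      assume "c \<in> set vs"
      then have "neighbours C c = {}" by (rule inner)
      moreover have "a \<in> neighbours C c" using c(1) by (simp add: insert_commute)
      ultimately show False by simp
    qed
    ultimately show False using c by simp
  qed
  moreover have "{a, b} \<notin> T" by (rule tree_no_cycle[OF tree dist \<open>vs \<noteq> []\<close> PT])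
  ultimately show ?thesis using ab E_eq by blast
qed

(* u, w, x, y span a diamond with tree path w x u y and black edges wu and xy. *)
lemma diamond_configuration:
  assumes uw: "{u, w} \<in> M" and xy: "{x, y} \<in> M"
    and nu: "neighbours T u = {x, y}" and nx: "neighbours T x = {u, w}"
  obtains a b where "neighbours T w = {x, a}" and "neighbours T y = {u, b}"
    and "distinct [a, w, x, u, y, b]"
proof -
  have wu: "{w, u} \<in> M" and yx: "{y, x} \<in> M" using uw xy by (simp_all add: insert_commute)
  have T: "{x, u} \<in> T" "{u, y} \<in> T" "{x, w} \<in> T"
    using neighbours_eq_doubletonD[OF nu] neighbours_eq_doubletonD[OF nx] by (simp_all add: insert_commute)
  have "x \<in> neighbours T w" using T(3) by (simp add: insert_commute)
  then obtain a where a: "a \<noteq> x" "neighbours T w = {x, a}" by (rule matched_neighbours_T[OF wu])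
  have "u \<in> neighbours T y" using T(2) by (simp add: insert_commute)
  then obtain b where b: "b \<noteq> u" "neighbours T y = {u, b}" by (rule matched_neighbours_T[OF yx])
  have Tab: "{w, a} \<in> T" "{y, b} \<in> T"
    using neighbours_eq_doubletonD(2)[OF a(2)] neighbours_eq_doubletonD(2)[OF b(2)] .
  have "u \<noteq> w" "x \<noteq> y" using uw xy M_sub edge_ends by blast+
  moreover have "w \<noteq> y" using tree_matching_ends[OF _ uw] T(2) by blast
  ultimately have d4: "distinct [w, x, u, y]" using T tree_no_loop[OF tree] by auto
  then have "{w, y} \<notin> T" using tree_no_cycle[OF tree, of w "[x, u]" y] T by (simp add: insert_commute)
  then have "a \<noteq> y" "b \<noteq> w" using Tab by (auto simp: insert_commute)
  moreover have "a \<noteq> u" "b \<noteq> x" using tree_matching_ends Tab wu yx by blast+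
  moreover have "a \<noteq> w" "b \<noteq> y" using tree_no_loop[OF tree] Tab by blast+
  ultimately have d5: "distinct [a, w, x, u, y]" using d4 a(1) by auto
  have "a \<noteq> b"
  proof
    assume "a = b"
    then have "{a, y} \<in> T" using Tab(2) by (simp add: insert_commute)
    then show False
      using tree_no_cycle[OF tree, of a "[w, x, u]" y] d5 Tab(1) T
      by (simp add: insert_commute)
  qed
  then have "distinct [a, w, x, u, y, b]"
    using d5 \<open>b \<noteq> w\<close> \<open>b \<noteq> x\<close> \<open>b \<noteq> y\<close> b(1) by auto
  with a(2) b(2) show ?thesis by (rule that)
qed

lemma second_tree_neighbour_not_adjacent:
  assumes "{w, u} \<in> M" and "neighbours T w = {x, a}" and "a' \<in> neighbours T a"
    and "a \<notin> neighbours T x" and "a \<notin> neighbours T u"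
  shows "{w, a'} \<notin> E"
proof
  assume "{w, a'} \<in> E"
  then have "a' \<in> {u, x, a}" using neighbours_E_matched[OF assms(1)] assms(2) by (simp flip: in_neighbours_iff)
  moreover have "a' \<noteq> a" using assms(3) tree_no_loop[OF tree] by auto
  moreover have "x \<notin> neighbours T a" "u \<notin> neighbours T a"
    using assms(4,5) by (simp_all add: insert_commute)
  ultimately show False using assms(3) by auto
qed

lemma diamond_configuration_reducible:
  assumes uw: "{u, w} \<in> M" and xy: "{x, y} \<in> M"
    and nu: "neighbours T u = {x, y}" and nx: "neighbours T x = {u, w}"
  shows "reducible V E T C"
proof -
  obtain a b where na: "neighbours T w = {x, a}" and nb: "neighbours T y = {u, b}"
    and dist: "distinct [a, w, x, u, y, b]"
    using diamond_configuration[OF assms] .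
  have wu: "{w, u} \<in> M" and yx: "{y, x} \<in> M" using uw xy by (simp_all add: insert_commute)
  show ?thesis
  proof (cases "{a, b} \<in> E")
    case False
    show ?thesis
      by (rule reducible_by_diamond[OF wu xy _ nu _ nb dist False])
        (use na nx in \<open>simp_all add: insert_commute\<close>)
  next
    case True
    have "{a, b} \<in> M"
    proof (rule closing_edge_in_M[of a "[w, x, u, y]" b])
      show "path_edges (a # [w, x, u, y] @ [b]) \<subseteq> T"
        using neighbours_eq_doubletonD[OF na] neighbours_eq_doubletonD[OF nb]
          neighbours_eq_doubletonD[OF nu] neighbours_eq_doubletonD[OF nx]
        by (simp add: insert_commute)
      show "neighbours C v = {}" if "v \<in> set [w, x, u, y]" for v
        using that matched_vertex(2)[OF wu] matched_vertex(2)[OF xy] matched_vertex(2)[OF uw]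
          matched_vertex(2)[OF yx] by auto
    qed (use dist True na nb nu nx in auto)
    moreover have "w \<in> neighbours T a" "y \<in> neighbours T b"
      using neighbours_eq_doubletonD(2)[OF na] neighbours_eq_doubletonD(2)[OF nb]
      by (simp_all add: insert_commute)
    ultimately obtain a' b' where na': "neighbours T a = {w, a'}" and nb': "neighbours T b = {y, b'}"
      using matched_neighbours_T[of a b] matched_neighbours_T[of b a] by (metis insert_commute)
    have "{w, a'} \<notin> E"
      using second_tree_neighbour_not_adjacent[OF wu na] na' nx nu dist by auto
    moreover have "{y, b'} \<notin> E"
      using second_tree_neighbour_not_adjacent[OF yx nb] nb' nx nu dist by auto
    ultimately show ?thesis by (rule reducible_by_tutte[OF \<open>{a, b} \<in> M\<close> na' nb'])
  qed
qed

lemma triangle_configuration_reducible: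
  assumes uw: "{u, w} \<in> M" and nu: "neighbours T u = {x, y}" and "{x, y} \<in> E"
  shows "reducible V E T C"
proof -
  have T: "{x, u} \<in> T" "{u, y} \<in> T" using neighbours_eq_doubletonD[OF nu] .
  have "card {x, y} = 2" using matched_vertex(1)[OF uw] nu by simp
  then have dist: "distinct [x, u, y]" using T tree_no_loop[OF tree] by auto
  have xy: "{x, y} \<in> M"
    using closing_edge_in_M[of x "[u]" y] dist T nu matched_vertex(2)[OF uw] \<open>{x, y} \<in> E\<close> by simp
  have yx: "{y, x} \<in> M" using xy by (simp add: insert_commute)
  have "u \<in> neighbours T x" "u \<in> neighbours T y" using T by (simp_all add: insert_commute)
  then obtain z z' where nx: "neighbours T x = {u, z}" and ny: "neighbours T y = {u, z'}"
    using matched_neighbours_T[OF xy] matched_neighbours_T[OF yx] by metis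
  have nE: "neighbours E u = {w, x, y}" using neighbours_E_matched[OF uw] nu by simp
  consider "z = w" | "z' = w" | "z \<noteq> w" "z' \<noteq> w" by blast
  then show ?thesis
  proof cases
    case 1
    then show ?thesis using diamond_configuration_reducible[OF uw xy nu] nx by simp
  next
    case 2
    then show ?thesis using diamond_configuration_reducible[of u w y x] uw yx nu ny by (simp add: insert_commute)
  next
    case 3
    have "z \<notin> {x, y}" "z' \<notin> {x, y}"
      using nx ny tree_no_loop[OF tree] tree_matching_ends[OF _ xy] tree_matching_ends[OF _ yx]
      by (auto simp flip: in_neighbours_iff)
    then have "{u, z} \<notin> E" "{u, z'} \<notin> E" using nE 3 by (auto simp flip: in_neighbours_iff)
    then show ?thesis by (rule reducible_by_tutte[OF xy nx ny])
  qed
qed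

lemma reducible_if_not_HIST:
  assumes "\<not> HIST V E T"
  shows "reducible V E T C"
proof -
  obtain u where "u \<in> V" and "card (neighbours T u) = 2"
    using assms spanning card_neighbours_sub[OF T_sub] by (auto simp: HIST_def)
  then obtain w where uw: "{u, w} \<in> M" by (rule degree_two_matched)
  then have wu: "{w, u} \<in> M" by (simp add: insert_commute)
  obtain x y where nu: "neighbours T u = {x, y}"
    using matched_vertex(1)[OF uw] by (auto simp: card_2_iff)
  obtain x' y' where nw: "neighbours T w = {x', y'}"
    using matched_vertex(1)[OF wu] by (auto simp: card_2_iff)
  consider "{x, y} \<in> E" | "{x', y'} \<in> E" | "{x, y} \<notin> E" "{x', y'} \<notin> E" by blast
  then show ?thesis
  proof cases
    case 1
    then show ?thesis by (rule triangle_configuration_reducible[OF uw nu])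
  next
    case 2
    then show ?thesis by (rule triangle_configuration_reducible[OF wu nw])
  next
    case 3
    then show ?thesis by (rule reducible_by_tutte[OF uw nu nw])
  qed
qed

end

lemma reduce_to_HIST:
  assumes "cubic V E" and "three_decomposition V E T C M"
  shows "\<exists>V' E' T' C' M'. cubic V' E' \<and> three_decomposition V' E' T' C' M' \<and>
    HIST V' E' T' \<and> dec_step\<^sup>*\<^sup>* (V', E', T', C', M') (V, E, T, C, M)"
  using assms
proof (induction "card V" arbitrary: V E T C M rule: less_induct)
  case less
  interpret cubic_decomposition V E T C M using less.prems by unfold_locales
  show ?case
  proof (cases "HIST V E T")
    case True
    then show ?thesis using less.prems by blast
  next
    case False
    then obtain V1 E1 T1 M1 where red: "cubic V1 E1" "card V1 < card V" "three_decomposition V1 E1 T1 C M1"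
      "tutte_ext (V1, E1, T1) (V, E, T) \<or> diamond_ext (V1, E1, T1) (V, E, T)"
      using reducible_if_not_HIST unfolding reducible_def by blast
    then have "dec_step (V1, E1, T1, C, M1) (V, E, T, C, M)"
      using less.prems by (simp add: dec_step_def)
    moreover obtain V' E' T' C' M' where "cubic V' E'" "three_decomposition V' E' T' C' M'"
      "HIST V' E' T'" "dec_step\<^sup>*\<^sup>* (V', E', T', C', M') (V1, E1, T1, C, M1)"
      using less.hyps[OF red(2,1,3)] by blast
    ultimately show ?thesis by (meson rtranclp.rtrancl_into_rtrancl)
  qed
qed

theorem theorem1:
  fixes V :: "'a set" and E T C M :: "'a set set"
  assumes "cubic V E"
    and "three_decomposition V E T C M"
  shows "(HIST V E T \<longrightarrow> M = {}) \<and>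
         (\<not> HIST V E T \<longrightarrow>
            (\<exists>V' E' T' M'. cubic V' E' \<and> card V' < card V \<and>
               three_decomposition V' E' T' C M' \<and>
               (tutte_ext (V', E', T') (V, E, T) \<or> diamond_ext (V', E', T') (V, E, T)))) \<and>
         (\<exists>V' E' T' C' M'. cubic V' E' \<and> three_decomposition V' E' T' C' M' \<and>
               HIST V' E' T' \<and> dec_step\<^sup>*\<^sup>* (V', E', T', C', M') (V, E, T, C, M))"
proof -
  interpret cubic_decomposition V E T C M using assms by unfold_locales
  show ?thesis
    using M_empty_if_HIST reducible_if_not_HIST reduce_to_HIST[OF assms]
    unfolding reducible_def by blast
qed

end
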